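(* Let $Q$ be a Moufang loop. For all $a,x,y\in Q$ and all $i,j\in\mathbb Z$: $$a^{3i}x\cdot a^{3j}y=a^{3(i+j)}T_a^{-i-2j}\big(T_a^{i-j}(x)T_a^{i+2j}(y)\big)=T_a^{2i+j}\big(T_a^{i-j}(x)T_a^{i+2j}(y)\big)a^{3(i+j)},$$ $$a^{3i}x\cdot ya^{3j}=a^{3(i+j)}T_a^{-i-2j}\big(T_a^{i-j}(x)T_a^{i-j}(y)\big)=T_a^{2i+j}\big(T_a^{i-j}(x)T_a^{i-j}(y)\big)a^{3(i+j)},$$ $$xa^{3i}\cdot a^{3j}y=a^{3(i+j)}T_a^{-i-2j}\big(T_a^{-2i-j}(x)T_a^{i+2j}(y)\big)=T_a^{2i+j}\big(T_a^{-2i-j}(x)T_a^{i+2j}(y)\big)a^{3(i+j)},$$ $$xa^{3i}\cdot ya^{3j}=a^{3(i+j)}T_a^{-i-2j}\big(T_a^{-2i-j}(x)T_a^{i-j}(y)\big)=T_a^{2i+j}\big(T_a^{-2i-j}(x)T_a^{i-j}(y)\big)a^{3(i+j)}.$$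
   Context: A loop is Moufang if it satisfies $xy\cdot zx=(x\cdot yz)x$ for all $x,y,z$; Moufang loops are diassociative, so powers $a^k$ are well defined. $T_a=R_a^{-1}L_a$ where $L_a(y)=ay$, $R_a(y)=ya$; thus $T_a(x)=axa^{-1}$, and $T_a^k$ denotes the $k$-th power (inverse for negative $k$) of this permutation. Juxtaposition $uv$ binds tighter than $\cdot$. *)

theory Defs
  imports Main
begin

definition loop :: "('a \<Rightarrow> 'a \<Rightarrow> 'a) \<Rightarrow> 'a \<Rightarrow> bool" where
  "loop M e \<longleftrightarrow> (\<forall>x. M e x = x \<and> M x e = x)
     \<and> (\<forall>a b. \<exists>!x. M a x = b) \<and> (\<forall>a b. \<exists>!y. M y a = b)"

definition moufang :: "('a \<Rightarrow> 'a \<Rightarrow> 'a) \<Rightarrow> 'a \<Rightarrow> bool" where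
  "moufang M e \<longleftrightarrow> loop M e \<and>
     (\<forall>x y z. M (M x y) (M z x) = M (M x (M y z)) x)"

definition ldiv :: "('a \<Rightarrow> 'a \<Rightarrow> 'a) \<Rightarrow> 'a \<Rightarrow> 'a \<Rightarrow> 'a" where
  "ldiv M a b = (THE x. M a x = b)"

definition rdiv :: "('a \<Rightarrow> 'a \<Rightarrow> 'a) \<Rightarrow> 'a \<Rightarrow> 'a \<Rightarrow> 'a" where
  "rdiv M b a = (THE y. M y a = b)"

definition npow :: "('a \<Rightarrow> 'a \<Rightarrow> 'a) \<Rightarrow> 'a \<Rightarrow> 'a \<Rightarrow> nat \<Rightarrow> 'a" where
  "npow M e a n = (M a ^^ n) e"

definition zpow :: "('a \<Rightarrow> 'a \<Rightarrow> 'a) \<Rightarrow> 'a \<Rightarrow> 'a \<Rightarrow> int \<Rightarrow> 'a" where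
  "zpow M e a k = (if 0 \<le> k then npow M e a (nat k) else npow M e (ldiv M a e) (nat (- k)))"

definition Tmap :: "('a \<Rightarrow> 'a \<Rightarrow> 'a) \<Rightarrow> 'a \<Rightarrow> 'a \<Rightarrow> 'a" where
  "Tmap M a x = rdiv M (M a x) a"

definition Tinv :: "('a \<Rightarrow> 'a \<Rightarrow> 'a) \<Rightarrow> 'a \<Rightarrow> 'a \<Rightarrow> 'a" where
  "Tinv M a x = ldiv M a (M x a)"

definition Tpow :: "('a \<Rightarrow> 'a \<Rightarrow> 'a) \<Rightarrow> 'a \<Rightarrow> int \<Rightarrow> 'a \<Rightarrow> 'a" where
  "Tpow M a k = (if 0 \<le> k then Tmap M a ^^ nat k else Tinv M a ^^ nat (- k))"

end

theory Submission
  imports Defs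
begin

text \<open>Write \<open>L\<close>, \<open>R\<close> for left and right multiplication by \<open>a\<close>. Flexibility makes \<open>L\<close> and \<open>R\<close>
  commute, so \<open>\<Phi>(p,q) = L\<^sup>p R\<^sup>q\<close> is a two-parameter group of permutations containing
  \<open>x \<mapsto> a\<^sup>n x = \<Phi>(n,0)\<close>, \<open>x \<mapsto> x a\<^sup>n = \<Phi>(0,n)\<close> and \<open>T\<^sub>a\<^sup>k = \<Phi>(k,-k)\<close>. The Moufang identity
  \<open>a u \<cdot> v a = a (u v) a\<close> says that \<open>(\<Phi>(1,0), \<Phi>(0,1), \<Phi>(1,1))\<close> is an autotopism, and its
  consequence \<open>u a\<inverse> \<cdot> a (v a) = (u v) a\<close> gives the autotopism \<open>(\<Phi>(0,-1), \<Phi>(1,1), \<Phi>(0,1))\<close>.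
  The exponent vectors of autotopisms of this shape form a subgroup of \<open>\<int>\<^sup>6\<close>, so
  \<open>(\<Phi>(p,-q), \<Phi>(q,p+q), \<Phi>(p,p+q))\<close> is an autotopism for all \<open>p, q\<close>. Every one of the eight
  identities is an instance of this family after rewriting both sides in terms of \<open>\<Phi>\<close>.\<close>

definition iter_int :: "('b \<Rightarrow> 'b) \<Rightarrow> ('b \<Rightarrow> 'b) \<Rightarrow> int \<Rightarrow> 'b \<Rightarrow> 'b" where
  "iter_int f g n = (if 0 \<le> n then f ^^ nat n else g ^^ nat (- n))"

lemma iter_int_0 [simp]: "iter_int f g 0 x = x"
  by (simp add: iter_int_def)

lemma iter_int_1 [simp]: "iter_int f g 1 x = f x"
  by (simp add: iter_int_def)

lemma iter_int_minus_1 [simp]: "iter_int f g (-1) x = g x"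
  by (simp add: iter_int_def)

lemma iter_int_succ:
  assumes "\<And>x. f (g x) = x"
  shows "iter_int f g (n + 1) x = f (iter_int f g n x)"
proof (cases "0 \<le> n")
  case True
  then have "nat (n + 1) = Suc (nat n)" by simp
  with True show ?thesis by (simp add: iter_int_def)
next
  case False
  then have "nat (- n) = Suc (nat (- (n + 1)))" by simp
  with False assms show ?thesis
    by (cases "n = -1") (simp_all add: iter_int_def)
qed

lemma iter_int_pred:
  assumes "\<And>x. g (f x) = x"
  shows "iter_int f g (n - 1) x = g (iter_int f g n x)"
proof (cases "1 \<le> n")
  case True
  then have "nat n = Suc (nat (n - 1))" by simp
  with True assms show ?thesis by (simp add: iter_int_def)
next
  case False
  then have "nat (- (n - 1)) = Suc (nat (- n))" by simp
  with False show ?thesis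
    by (cases "n = 0") (simp_all add: iter_int_def)
qed

lemma iter_int_add:
  assumes fg: "\<And>x. f (g x) = x" and gf: "\<And>x. g (f x) = x"
  shows "iter_int f g (m + n) x = iter_int f g m (iter_int f g n x)"
proof (induction m rule: int_induct[where k = 0])
  case base
  show ?case by simp
next
  case (step1 i)
  have "iter_int f g (i + 1 + n) x = f (iter_int f g (i + n) x)"
    using iter_int_succ[of f g "i + n", OF fg] by (simp add: algebra_simps)
  with step1 show ?case by (simp add: iter_int_succ[where f = f and g = g, OF fg])
next
  case (step2 i)
  have "iter_int f g (i - 1 + n) x = g (iter_int f g (i + n) x)"
    using iter_int_pred[of g f "i + n", OF gf] by (simp add: algebra_simps)
  with step2 show ?case by (simp add: iter_int_pred[where f = f and g = g, OF gf])
qed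

lemma iter_int_commute:
  assumes fg: "\<And>x. f (g x) = x" and gf: "\<And>x. g (f x) = x"
    and hf: "\<And>x. h (f x) = f (h x)"
  shows "h (iter_int f g n x) = iter_int f g n (h x)"
proof -
  have hg: "h (g y) = g (h y)" for y
    by (metis fg gf hf)
  show ?thesis
  proof (induction n rule: int_induct[where k = 0])
    case base
    show ?case by simp
  next
    case (step1 i)
    then show ?case by (simp add: iter_int_succ[where f = f and g = g, OF fg] hf)
  next
    case (step2 i)
    then show ?case by (simp add: iter_int_pred[where f = f and g = g, OF gf] hg)
  qed
qed

definition autotopism :: "('a \<Rightarrow> 'a \<Rightarrow> 'a) \<Rightarrow> ('a \<Rightarrow> 'a) \<Rightarrow> ('a \<Rightarrow> 'a) \<Rightarrow> ('a \<Rightarrow> 'a) \<Rightarrow> bool" where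
  "autotopism M f g h \<longleftrightarrow> (\<forall>u v. M (f u) (g v) = h (M u v))"

lemma autotopism_id: "autotopism M id id id"
  by (simp add: autotopism_def)

lemma autotopism_comp:
  "autotopism M f g h \<Longrightarrow> autotopism M f' g' h' \<Longrightarrow> autotopism M (f \<circ> f') (g \<circ> g') (h \<circ> h')"
  by (simp add: autotopism_def)

lemma autotopism_inverse:
  assumes "autotopism M f g h"
    and "\<And>x. f (f' x) = x" and "\<And>x. g (g' x) = x" and "\<And>x. h' (h x) = x"
  shows "autotopism M f' g' h'"
  unfolding autotopism_def
proof (intro allI)
  fix u v
  have "M (f' u) (g' v) = h' (M (f (f' u)) (g (g' v)))"
    using assms unfolding autotopism_def by metis
  then show "M (f' u) (g' v) = h' (M u v)"
    using assms by simp
qed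

locale moufang_loop =
  fixes M :: "'a \<Rightarrow> 'a \<Rightarrow> 'a" and e :: 'a
  assumes moufang: "moufang M e"
begin

lemma loop: "loop M e"
  using moufang by (simp add: moufang_def)

lemma moufang_identity: "M (M x y) (M z x) = M (M x (M y z)) x"
  using moufang by (simp add: moufang_def)

lemma left_unit [simp]: "M e x = x" and right_unit [simp]: "M x e = x"
  using loop by (auto simp: loop_def)

lemma ex1_left_solution: "\<exists>!x. M a x = b"
  and ex1_right_solution: "\<exists>!y. M y a = b"
  using loop by (simp_all add: loop_def)

lemma left_cancel: "M a x = M a y \<Longrightarrow> x = y"
  using ex1_left_solution[of a "M a x"] by (metis (mono_tags))

lemma right_cancel: "M x a = M y a \<Longrightarrow> x = y"
  using ex1_right_solution[of a "M x a"] by (metis (mono_tags))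

lemma mult_ldiv: "M a (ldiv M a b) = b"
  unfolding ldiv_def by (rule theI'[OF ex1_left_solution])

lemma rdiv_mult: "M (rdiv M b a) a = b"
  unfolding rdiv_def by (rule theI'[OF ex1_right_solution])

definition linv :: "'a \<Rightarrow> 'a" where
  "linv a = ldiv M a e"

lemma mult_linv [simp]: "M a (linv a) = e"
  by (simp add: linv_def mult_ldiv)

lemma flexible: "M x (M z x) = M (M x z) x"
  using moufang_identity[of x e z] by simp

lemma left_inverse_property [simp]: "M x (M (linv x) z) = z"
proof -
  have "M (M x (linv x)) (M z x) = M (M x (M (linv x) z)) x"
    by (rule moufang_identity)
  then show ?thesis
    by (simp add: right_cancel[symmetric])
qed

lemma linv_mult [simp]: "M (linv x) x = e"
  by (metis left_inverse_property right_unit left_cancel)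

lemma left_inverse_property' [simp]: "M (linv x) (M x z) = z"
  by (metis left_inverse_property left_cancel)

lemma right_inverse_property [simp]: "M (M y (linv x)) x = y"
proof -
  have "M (M x y) (M (linv x) x) = M (M x (M y (linv x))) x"
    by (rule moufang_identity)
  then have "M x y = M x (M (M y (linv x)) x)"
    by (simp add: flexible)
  then show ?thesis
    by (rule left_cancel[symmetric])
qed

lemma right_inverse_property' [simp]: "M (M y x) (linv x) = y"
  by (metis right_inverse_property right_cancel)

lemma linv_linv [simp]: "linv (linv x) = x"
  by (metis mult_linv linv_mult left_cancel)

lemma linv_of_mult: "linv (M x y) = M (linv y) (linv x)"
  by (metis left_inverse_property' right_inverse_property')

lemma ldiv_eq: "ldiv M a b = M (linv a) b"
  by (metis mult_ldiv left_inverse_property left_cancel)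

lemma rdiv_eq: "rdiv M b a = M b (linv a)"
  by (metis rdiv_mult right_inverse_property right_cancel)

lemma mult_left_right: "M (M a u) (M v a) = M a (M (M u v) a)"
  by (simp add: moufang_identity flexible)

lemma mult_rinv_left_right: "M (M u (linv a)) (M a (M v a)) = M (M u v) a"
proof -
  have "M (M a (linv u)) (M (M u v) a) = M a (M v a)"
    using mult_left_right[of a "linv u" "M u v"] by simp
  then have "M (M u (linv a)) (M a (M v a)) = M (linv (M a (linv u))) (M (M a (linv u)) (M (M u v) a))"
    by (simp add: linv_of_mult)
  then show ?thesis
    by simp
qed

definition LR :: "'a \<Rightarrow> int \<Rightarrow> int \<Rightarrow> 'a \<Rightarrow> 'a" where
  "LR a p q = iter_int (M a) (M (linv a)) p \<circ> iter_int (\<lambda>z. M z a) (\<lambda>z. M z (linv a)) q"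

lemma LR_commute:
  "iter_int (M a) (M (linv a)) p (iter_int (\<lambda>z. M z a) (\<lambda>z. M z (linv a)) q x)
    = iter_int (\<lambda>z. M z a) (\<lambda>z. M z (linv a)) q (iter_int (M a) (M (linv a)) p x)"
proof -
  have "M (iter_int (M a) (M (linv a)) p z) a = iter_int (M a) (M (linv a)) p (M z a)" for z
    by (rule iter_int_commute) (simp_all add: flexible)
  then show ?thesis
    by (intro iter_int_commute) simp_all
qed

lemma LR_LR: "LR a p q (LR a p' q' x) = LR a (p + p') (q + q') x"
  by (simp add: LR_def iter_int_add LR_commute)

lemma LR_comp: "LR a p q \<circ> LR a p' q' = LR a (p + p') (q + q')"
  by (simp add: fun_eq_iff LR_LR)

lemma LR_0_0 [simp]: "LR a 0 0 x = x"
  and LR_1_0: "LR a 1 0 x = M a x"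
  and LR_0_1: "LR a 0 1 x = M x a"
  and LR_1_1: "LR a 1 1 x = M a (M x a)"
  and LR_0_minus_1: "LR a 0 (-1) x = M x (linv a)"
  and LR_minus_1_0: "LR a (-1) 0 x = M (linv a) x"
  by (simp_all add: LR_def)

lemma zpow_eq_LR: "zpow M e a n = LR a n 0 e"
  by (simp add: zpow_def LR_def iter_int_def npow_def linv_def)

lemma Tpow_eq_LR: "Tpow M a k x = LR a k (-k) x"
proof -
  have Tmap: "Tmap M a x = LR a 1 (-1) x" for x
    using LR_LR[of a 0 "-1" 1 0 x] by (simp add: Tmap_def rdiv_eq LR_0_minus_1 LR_1_0)
  have Tinv: "Tinv M a x = LR a (-1) 1 x" for x
    using LR_LR[of a "-1" 0 0 1 x] by (simp add: Tinv_def ldiv_eq LR_0_1 LR_minus_1_0)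
  have "(Tmap M a ^^ n) x = LR a (int n) (- int n) x"
    and "(Tinv M a ^^ n) x = LR a (- int n) (int n) x" for n
    by (induction n) (simp_all add: Tmap Tinv LR_LR algebra_simps)
  then show ?thesis
    by (simp add: Tpow_def)
qed

definition LR_autotopism :: "'a \<Rightarrow> int \<Rightarrow> int \<Rightarrow> int \<Rightarrow> int \<Rightarrow> int \<Rightarrow> int \<Rightarrow> bool" where
  "LR_autotopism a p1 q1 p2 q2 p3 q3 \<longleftrightarrow> autotopism M (LR a p1 q1) (LR a p2 q2) (LR a p3 q3)"

lemma LR_autotopism_add:
  "LR_autotopism a p1 q1 p2 q2 p3 q3 \<Longrightarrow> LR_autotopism a p1' q1' p2' q2' p3' q3'
    \<Longrightarrow> LR_autotopism a (p1 + p1') (q1 + q1') (p2 + p2') (q2 + q2') (p3 + p3') (q3 + q3')"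
  unfolding LR_autotopism_def by (metis LR_comp autotopism_comp)

lemma LR_autotopism_uminus:
  "LR_autotopism a p1 q1 p2 q2 p3 q3 \<Longrightarrow> LR_autotopism a (-p1) (-q1) (-p2) (-q2) (-p3) (-q3)"
  unfolding LR_autotopism_def by (erule autotopism_inverse) (simp_all add: LR_LR)

lemma LR_autotopism_scale:
  assumes "LR_autotopism a p1 q1 p2 q2 p3 q3"
  shows "LR_autotopism a (n * p1) (n * q1) (n * p2) (n * q2) (n * p3) (n * q3)"
proof (induction n rule: int_induct[where k = 0])
  case base
  have "LR a 0 0 = id" by (simp add: fun_eq_iff)
  then show ?case by (simp add: LR_autotopism_def autotopism_id)
next
  case (step1 i)
  then show ?case
    using LR_autotopism_add[OF step1(2) assms] by (simp add: algebra_simps)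
next
  case (step2 i)
  then show ?case
    using LR_autotopism_add[OF step2(2) LR_autotopism_uminus[OF assms]] by (simp add: algebra_simps)
qed

lemma LR_autotopism_family: "LR_autotopism a p (-q) q (p + q) p (p + q)"
proof -
  have "LR_autotopism a 1 0 0 1 1 1"
    by (simp add: LR_autotopism_def autotopism_def LR_1_0 LR_0_1 LR_1_1 mult_left_right)
  moreover have "LR_autotopism a 0 (-1) 1 1 0 1"
    by (simp add: LR_autotopism_def autotopism_def LR_0_minus_1 LR_0_1 LR_1_1 mult_rinv_left_right)
  ultimately have "LR_autotopism a (p * 1 + q * 0) (p * 0 + q * (-1)) (p * 0 + q * 1)
      (p * 1 + q * 1) (p * 1 + q * 0) (p * 1 + q * 1)"
    by (intro LR_autotopism_add LR_autotopism_scale)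
  then show ?thesis
    by simp
qed

lemma mult_LR_LR:
  assumes "p1 = p3 + r1" "q1 = p3 - q3 + s1" "p2 = q3 - p3 + r2" "q2 = q3 + s2"
  shows "M (LR a p1 q1 u) (LR a p2 q2 v) = LR a p3 q3 (M (LR a r1 s1 u) (LR a r2 s2 v))"
proof -
  have "M (LR a p3 (p3 - q3) (LR a r1 s1 u)) (LR a (q3 - p3) q3 (LR a r2 s2 v))
      = LR a p3 q3 (M (LR a r1 s1 u) (LR a r2 s2 v))"
    using LR_autotopism_family[of a p3 "q3 - p3"] by (simp add: LR_autotopism_def autotopism_def)
  then show ?thesis
    unfolding assms by (simp add: LR_LR algebra_simps)
qed

text \<open>Here \<open>a\<^sup>n\<close> is \<open>L\<^sup>n e\<close>, so \<open>a\<^sup>n x = L\<^sup>n x\<close> is not automatic in a nonassociative loop.\<close>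

lemma zpow_mult: "M (zpow M e a n) x = LR a n 0 x"
proof -
  have "M (LR a n 0 e) (LR a 0 0 x) = LR a n n (M (LR a 0 0 e) (LR a 0 (-n) x))"
    by (rule mult_LR_LR) simp_all
  then show ?thesis
    by (simp add: zpow_eq_LR LR_LR)
qed

lemma mult_zpow: "M x (zpow M e a n) = LR a 0 n x"
proof -
  have "M (LR a 0 0 x) (LR a n 0 e) = LR a (-n) 0 (M (LR a n n x) (LR a 0 0 e))"
    by (rule mult_LR_LR) simp_all
  then show ?thesis
    by (simp add: zpow_eq_LR LR_LR)
qed

end

theorem mainTheorem10:
  fixes M :: "'a \<Rightarrow> 'a \<Rightarrow> 'a" and e :: 'a
  assumes "moufang M e"
  shows "\<forall>a x y. \<forall>i j :: int.
    M (M (zpow M e a (3*i)) x) (M (zpow M e a (3*j)) y)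
      = M (zpow M e a (3*(i+j))) (Tpow M a (-i-2*j) (M (Tpow M a (i-j) x) (Tpow M a (i+2*j) y)))
  \<and> M (M (zpow M e a (3*i)) x) (M (zpow M e a (3*j)) y)
      = M (Tpow M a (2*i+j) (M (Tpow M a (i-j) x) (Tpow M a (i+2*j) y))) (zpow M e a (3*(i+j)))
  \<and> M (M (zpow M e a (3*i)) x) (M y (zpow M e a (3*j)))
      = M (zpow M e a (3*(i+j))) (Tpow M a (-i-2*j) (M (Tpow M a (i-j) x) (Tpow M a (i-j) y)))
  \<and> M (M (zpow M e a (3*i)) x) (M y (zpow M e a (3*j)))
      = M (Tpow M a (2*i+j) (M (Tpow M a (i-j) x) (Tpow M a (i-j) y))) (zpow M e a (3*(i+j)))
  \<and> M (M x (zpow M e a (3*i))) (M (zpow M e a (3*j)) y)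
      = M (zpow M e a (3*(i+j))) (Tpow M a (-i-2*j) (M (Tpow M a (-2*i-j) x) (Tpow M a (i+2*j) y)))
  \<and> M (M x (zpow M e a (3*i))) (M (zpow M e a (3*j)) y)
      = M (Tpow M a (2*i+j) (M (Tpow M a (-2*i-j) x) (Tpow M a (i+2*j) y))) (zpow M e a (3*(i+j)))
  \<and> M (M x (zpow M e a (3*i))) (M y (zpow M e a (3*j)))
      = M (zpow M e a (3*(i+j))) (Tpow M a (-i-2*j) (M (Tpow M a (-2*i-j) x) (Tpow M a (i-j) y)))
  \<and> M (M x (zpow M e a (3*i))) (M y (zpow M e a (3*j)))
      = M (Tpow M a (2*i+j) (M (Tpow M a (-2*i-j) x) (Tpow M a (i-j) y))) (zpow M e a (3*(i+j)))"
proof -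
  interpret moufang_loop M e
    using assms by unfold_locales
  show ?thesis
    unfolding zpow_mult mult_zpow Tpow_eq_LR LR_LR
    by (intro allI conjI; rule mult_LR_LR; simp add: algebra_simps)
qed

end
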